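(* Let $m,n \ge 1$ be integers with $\gcd(m,n) > 1$ and such that $(m,n) \neq (2,2)$ (i.e., at least one of $m,n$ is different from $2$). Then the tensor product $K_m \otimes K_n$ is not a circulant graph.
   Context: Graphs have no multiple edges but may have loops. The tensor product $G \otimes H$ of graphs $G$ and $H$ has vertex set $V(G)\times V(H)$, with $(g,h)$ adjacent to $(g',h')$ if and only if $g$ is adjacent to $g'$ in $G$ and $h$ is adjacent to $h'$ in $H$. For an integer $n\ge 1$ and a set $S$ of integers, the circulant graph $C_nS$ has vertex set $\{0,1,\dots,n-1\}$, with $i$ adjacent to $j$ if and only if $i-j \equiv \pm s \pmod n$ for some $s\in S$. A graph is circulant if it is isomorphic to some $C_nS$; equivalently, if its automorphism group contains a cyclic subgroup acting transitively on the vertices. $K_n$ denotes the complete graph on $n$ vertices (no loops). *)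

theory Defs
  imports Main
begin

text \<open>A graph (possibly with loops, no multiple edges) is represented by a vertex set
  together with a symmetric adjacency relation on it.\<close>

record 'a graph =
  verts :: "'a set"
  adj :: "'a \<Rightarrow> 'a \<Rightarrow> bool"

definition complete_graph :: "nat \<Rightarrow> nat graph" where
  "complete_graph n = \<lparr> verts = {0..<n}, adj = (\<lambda>i j. i \<in> {0..<n} \<and> j \<in> {0..<n} \<and> i \<noteq> j) \<rparr>"

definition tensor_product :: "'a graph \<Rightarrow> 'b graph \<Rightarrow> ('a \<times> 'b) graph" where
  "tensor_product G H = \<lparr> verts = verts G \<times> verts H,
     adj = (\<lambda>(g, h) (g', h'). (g, h) \<in> verts G \<times> verts H \<and> (g', h') \<in> verts G \<times> verts H
              \<and> adj G g g' \<and> adj H h h') \<rparr>"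

definition circulant_graph :: "nat \<Rightarrow> int set \<Rightarrow> nat graph" where
  "circulant_graph n S = \<lparr> verts = {0..<n},
     adj = (\<lambda>i j. i \<in> {0..<n} \<and> j \<in> {0..<n} \<and>
              (\<exists>s\<in>S. (int i - int j) mod int n = s mod int n
                    \<or> (int i - int j) mod int n = (- s) mod int n)) \<rparr>"

definition graph_iso :: "'a graph \<Rightarrow> 'b graph \<Rightarrow> bool" where
  "graph_iso G H \<longleftrightarrow> (\<exists>f. bij_betw f (verts G) (verts H) \<and>
     (\<forall>x\<in>verts G. \<forall>y\<in>verts G. adj G x y \<longleftrightarrow> adj H (f x) (f y)))"

definition is_circulant :: "'a graph \<Rightarrow> bool" where
  "is_circulant G \<longleftrightarrow> (\<exists>n S. n \<ge> 1 \<and> graph_iso G (circulant_graph n S))"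

end

theory Submission
  imports Defs
begin

(* A circulant graph on N vertices has an automorphism whose k-th power fixes a vertex only
  when N divides k. In K_m \<otimes> K_n two vertices are non-adjacent iff they share a row or a
  column, so every automorphism maps lines to lines, and either preserves rows and columns,
  acting as (i, j) \<mapsto> (\<pi> i, \<rho> j), or interchanges them.
  In the first case pick a row and a column of periods r \<le> m and s \<le> n under \<pi> and \<rho>: the
  lcm(r, s)-th power fixes their intersection, so mn \<le> lcm(r, s) \<le> rs \<le> mn, which forces
  lcm(m, n) = mn. In the second case the square is of the first kind; a row i of period r \<le> m
  under it gives the fixed point (i, \<beta> i) of the 2r-th power, so mn \<le> 2m, and symmetrically
  mn \<le> 2n, whence m = n = 2. *)

lemma funpow_in_set: "f ` A \<subseteq> A \<Longrightarrow> x \<in> A \<Longrightarrow> (f ^^ k) x \<in> A"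
  by (induction k) auto

lemma funpow_conjugate:
  assumes f: "bij_betw f A B" and "\<psi> ` B \<subseteq> B" and "x \<in> A"
  shows "((inv_into A f \<circ> \<psi> \<circ> f) ^^ k) x = inv_into A f ((\<psi> ^^ k) (f x))"
proof (induction k)
  case 0
  show ?case using f \<open>x \<in> A\<close> by (simp add: bij_betw_inv_into_left)
next
  case (Suc k)
  have "(\<psi> ^^ k) (f x) \<in> B"
    using funpow_in_set[OF \<open>\<psi> ` B \<subseteq> B\<close>] bij_betwE[OF f] \<open>x \<in> A\<close> by blast
  then show ?case using Suc.IH f by (simp add: bij_betw_inv_into_right)
qed

lemma funpow_product_map:
  assumes "f ` A \<subseteq> A" and "\<And>x. x \<in> A \<Longrightarrow> f x = (\<pi> (fst x), \<rho> (snd x))" and "x \<in> A"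
  shows "(f ^^ k) x = ((\<pi> ^^ k) (fst x), (\<rho> ^^ k) (snd x))"
proof (induction k)
  case (Suc k)
  have "(f ^^ k) x \<in> A"
    using funpow_in_set assms(1,3) .
  then show ?case using Suc.IH assms(2) by simp
qed simp

lemma funpow_comp_commute: "\<beta> (((\<alpha> \<circ> \<beta>) ^^ k) i) = ((\<beta> \<circ> \<alpha>) ^^ k) (\<beta> i)"
  by (induction k) simp_all

lemma funpow_fixed_dvd:
  assumes "(f ^^ r) y = y" and "r dvd k"
  shows "(f ^^ k) y = y"
proof -
  obtain q where k: "k = r * q"
    using assms(2) by (rule dvdE)
  have "((f ^^ r) ^^ q) y = y"
    by (induction q) (simp_all add: assms(1))
  then show ?thesis
    by (simp add: k funpow_mult)
qed

lemma exists_periodic_point: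
  assumes "f ` A \<subseteq> A" and "finite A" and "a \<in> A"
  obtains y r where "y \<in> A" "0 < r" "r \<le> card A" "(f ^^ r) y = y"
proof -
  let ?orbit = "\<lambda>k. (f ^^ k) a"
  have "?orbit ` {0..card A} \<subseteq> A"
    using funpow_in_set[OF assms(1,3)] by blast
  then have "card (?orbit ` {0..card A}) \<le> card A"
    by (rule card_mono[OF assms(2)])
  then have "card (?orbit ` {0..card A}) < card {0..card A}"
    by simp
  then have "\<not> inj_on ?orbit {0..card A}"
    by (rule pigeonhole)
  then obtain i j where ij: "i < j" "j \<le> card A" "?orbit i = ?orbit j"
    by (auto intro!: linorder_inj_onI')
  have "(f ^^ (j - i)) (?orbit i) = (f ^^ (j - i + i)) a"
    by (simp only: funpow_add comp_apply)
  also have "j - i + i = j"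
    using ij(1) by simp
  finally show ?thesis
    using that[of "?orbit i" "j - i"] ij funpow_in_set[OF assms(1,3)] by simp
qed

lemma coprime_if_dvd_lcm:
  fixes m n r s :: nat
  assumes "0 < r" "r \<le> m" "0 < s" "s \<le> n" and "m * n dvd lcm r s"
  shows "coprime m n"
proof -
  have pos: "0 < m" "0 < n"
    using assms by linarith+
  have "m * n \<le> lcm r s"
    using assms by (simp add: dvd_imp_le lcm_pos_nat)
  also have "\<dots> \<le> r * s"
    using assms(1,3) by (intro dvd_imp_le lcm_least) simp_all
  finally have le: "m * n \<le> r * s" .
  have "r * s \<le> r * n" "r * n \<le> m * n"
    using assms(2,4) by simp_all
  with le have "r * n = m * n" "r * s = r * n"
    by linarith+
  with assms(1,3,4) have "r = m" "s = n"
    by simp_all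
  with \<open>m * n \<le> lcm r s\<close> have "gcd m n * lcm m n \<le> 1 * lcm m n"
    by (simp flip: prod_gcd_lcm_nat)
  moreover have "0 < lcm m n"
    using pos by (rule lcm_pos_nat)
  ultimately have "gcd m n \<le> 1"
    by (simp only: mult_le_cancel2)
  moreover have "0 < gcd m n"
    using pos by simp
  ultimately show ?thesis
    unfolding coprime_iff_gcd_eq_1 by linarith
qed

definition graph_aut :: "'a graph \<Rightarrow> ('a \<Rightarrow> 'a) \<Rightarrow> bool" where
  "graph_aut G \<phi> \<longleftrightarrow> bij_betw \<phi> (verts G) (verts G) \<and>
     (\<forall>x\<in>verts G. \<forall>y\<in>verts G. adj G (\<phi> x) (\<phi> y) \<longleftrightarrow> adj G x y)"

lemma graph_aut_conjugate:
  assumes f: "bij_betw f (verts G) (verts H)"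
    and iso: "\<forall>x\<in>verts G. \<forall>y\<in>verts G. adj G x y \<longleftrightarrow> adj H (f x) (f y)"
    and aut: "graph_aut H \<psi>"
  shows "graph_aut G (inv_into (verts G) f \<circ> \<psi> \<circ> f)"
proof -
  let ?g = "inv_into (verts G) f"
  have g: "bij_betw ?g (verts H) (verts G)"
    using f by (rule bij_betw_inv_into)
  have \<psi>: "bij_betw \<psi> (verts H) (verts H)"
    using aut unfolding graph_aut_def by blast
  have "adj G (?g (\<psi> (f x))) (?g (\<psi> (f y))) \<longleftrightarrow> adj G x y"
    if "x \<in> verts G" "y \<in> verts G" for x y
  proof -
    have fx: "f x \<in> verts H" "f y \<in> verts H"
      using that bij_betwE[OF f] by blast+
    then have "\<psi> (f x) \<in> verts H" "\<psi> (f y) \<in> verts H"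
      using bij_betwE[OF \<psi>] by blast+
    then have "adj G (?g (\<psi> (f x))) (?g (\<psi> (f y))) \<longleftrightarrow> adj H (\<psi> (f x)) (\<psi> (f y))"
      using iso bij_betwE[OF g] f by (simp add: bij_betw_inv_into_right)
    also have "\<dots> \<longleftrightarrow> adj H (f x) (f y)"
      using aut fx unfolding graph_aut_def by blast
    also have "\<dots> \<longleftrightarrow> adj G x y"
      using iso that by blast
    finally show ?thesis .
  qed
  then show ?thesis
    using bij_betw_trans[OF bij_betw_trans[OF f \<psi>] g] unfolding graph_aut_def by (simp add: comp_assoc)
qed

lemma diff_mod_shift:
  "(int ((i + 1) mod N) - int ((j + 1) mod N)) mod int N = (int i - int j) mod int N"
proof -
  have "(int ((i + 1) mod N) - int ((j + 1) mod N)) mod int N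
      = (int (i + 1) mod int N - int (j + 1) mod int N) mod int N"
    by (simp only: zmod_int)
  also have "\<dots> = (int i - int j) mod int N"
    by (simp add: mod_diff_eq)
  finally show ?thesis .
qed

lemma circulant_graph_shift_aut:
  assumes "N \<ge> 1"
  shows "graph_aut (circulant_graph N S) (\<lambda>i. (i + 1) mod N)"
proof -
  have "inj_on (\<lambda>i. (i + 1) mod N) {0..<N}"
    by (rule inj_onI) (metis atLeastLessThan_iff Suc_eq_plus1 Zero_not_Suc diff_Suc_1 mod_Suc mod_less)
  moreover have "(\<lambda>i. (i + 1) mod N) ` {0..<N} \<subseteq> {0..<N}"
    using assms by auto
  ultimately have "bij_betw (\<lambda>i. (i + 1) mod N) {0..<N} {0..<N}"
    by (simp add: bij_betw_def endo_inj_surj)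
  then show ?thesis
    using assms unfolding graph_aut_def circulant_graph_def graph.simps diff_mod_shift by auto
qed

lemma funpow_shift_mod: "i < N \<Longrightarrow> ((\<lambda>i. (i + 1) mod N) ^^ k) i = (i + k) mod N"
  by (induction k) (simp_all add: mod_Suc_eq)

lemma is_circulant_regular_aut:
  assumes "is_circulant G"
  obtains \<phi> where "graph_aut G \<phi>"
    and "\<And>k x. x \<in> verts G \<Longrightarrow> (\<phi> ^^ k) x = x \<Longrightarrow> card (verts G) dvd k"
proof -
  obtain N S f where N: "N \<ge> 1" and f: "bij_betw f (verts G) (verts (circulant_graph N S))"
    and iso: "\<forall>x\<in>verts G. \<forall>y\<in>verts G. adj G x y \<longleftrightarrow> adj (circulant_graph N S) (f x) (f y)"
    using assms unfolding is_circulant_def graph_iso_def by blast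
  have verts_C: "verts (circulant_graph N S) = {0..<N}"
    by (simp add: circulant_graph_def)
  let ?\<psi> = "\<lambda>i. (i + 1) mod N"
  let ?\<phi> = "inv_into (verts G) f \<circ> ?\<psi> \<circ> f"
  have "card (verts G) dvd k" if x: "x \<in> verts G" and fixed: "(?\<phi> ^^ k) x = x" for k x
  proof -
    have fx: "f x < N"
      using bij_betwE[OF f] x verts_C by auto
    have "?\<psi> ` {0..<N} \<subseteq> {0..<N}"
      using N by auto
    then have "inv_into (verts G) f ((f x + k) mod N) = x"
      using funpow_conjugate[OF f[unfolded verts_C]] funpow_shift_mod[OF fx] x fixed by simp
    moreover have "(f x + k) mod N \<in> verts (circulant_graph N S)"
      using N verts_C by simp
    ultimately have "(f x + k) mod N = f x mod N"
      using bij_betw_inv_into_right[OF f, of "(f x + k) mod N"] fx by simp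
    then have "N dvd k"
      by (simp add: mod_eq_dvd_iff_nat)
    moreover have "card (verts G) = N"
      using bij_betw_same_card[OF f] verts_C by simp
    ultimately show ?thesis by simp
  qed
  moreover have "graph_aut G ?\<phi>"
    using graph_aut_conjugate[OF f iso circulant_graph_shift_aut[OF N]] .
  ultimately show ?thesis using that by blast
qed

definition same_line :: "'a \<times> 'b \<Rightarrow> 'a \<times> 'b \<Rightarrow> bool" where
  "same_line x y \<longleftrightarrow> fst x = fst y \<or> snd x = snd y"

abbreviation grid :: "nat \<Rightarrow> nat \<Rightarrow> (nat \<times> nat) set" where
  "grid m n \<equiv> {0..<m} \<times> {0..<n}"

lemma verts_tensor_complete_graph:
  "verts (tensor_product (complete_graph m) (complete_graph n)) = grid m n"
  by (simp add: tensor_product_def complete_graph_def)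

lemma adj_tensor_complete_graph:
  assumes "x \<in> grid m n" "y \<in> grid m n"
  shows "adj (tensor_product (complete_graph m) (complete_graph n)) x y \<longleftrightarrow> \<not> same_line x y"
  using assms by (cases x, cases y) (auto simp: tensor_product_def complete_graph_def same_line_def)

lemma same_line_third_point:
  assumes "a \<noteq> b" "same_line a b" "same_line a c" "same_line b c"
  shows "fst a = fst b \<Longrightarrow> fst c = fst a" and "fst a \<noteq> fst b \<Longrightarrow> snd c = snd a"
    and "snd a = snd b \<Longrightarrow> snd c = snd a" and "snd a \<noteq> snd b \<Longrightarrow> fst c = fst a"
  using assms by (auto simp: same_line_def prod_eq_iff)

locale line_preserving_grid_map =
  fixes m n :: nat and \<phi> :: "nat \<times> nat \<Rightarrow> nat \<times> nat"
  assumes m: "2 \<le> m" and n: "2 \<le> n"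
    and inj: "inj_on \<phi> (grid m n)"
    and same_line_iff: "\<And>x y. x \<in> grid m n \<Longrightarrow> y \<in> grid m n \<Longrightarrow>
          same_line (\<phi> x) (\<phi> y) \<longleftrightarrow> same_line x y"
begin

definition row_to_row :: "nat \<Rightarrow> bool" where
  "row_to_row i \<longleftrightarrow> fst (\<phi> (i, 0)) = fst (\<phi> (i, 1))"

definition col_to_col :: "nat \<Rightarrow> bool" where
  "col_to_col j \<longleftrightarrow> snd (\<phi> (0, j)) = snd (\<phi> (1, j))"

lemma row_image:
  assumes "x \<in> grid m n"
  shows "row_to_row (fst x) \<Longrightarrow> fst (\<phi> x) = fst (\<phi> (fst x, 0))"
    and "\<not> row_to_row (fst x) \<Longrightarrow> snd (\<phi> x) = snd (\<phi> (fst x, 0))"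
proof -
  let ?p = "(fst x, 0)" and ?q = "(fst x, 1)"
  have pq: "?p \<in> grid m n" "?q \<in> grid m n"
    using assms n by auto
  have "\<phi> ?p \<noteq> \<phi> ?q"
    using inj_onD[OF inj _ pq] by auto
  moreover have "same_line (\<phi> ?p) (\<phi> ?q)" "same_line (\<phi> ?p) (\<phi> x)" "same_line (\<phi> ?q) (\<phi> x)"
    using same_line_iff pq assms by (simp_all add: same_line_def)
  ultimately show "row_to_row (fst x) \<Longrightarrow> fst (\<phi> x) = fst (\<phi> (fst x, 0))"
    and "\<not> row_to_row (fst x) \<Longrightarrow> snd (\<phi> x) = snd (\<phi> (fst x, 0))"
    unfolding row_to_row_def by (auto dest: same_line_third_point)
qed

lemma col_image:
  assumes "x \<in> grid m n"
  shows "col_to_col (snd x) \<Longrightarrow> snd (\<phi> x) = snd (\<phi> (0, snd x))"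
    and "\<not> col_to_col (snd x) \<Longrightarrow> fst (\<phi> x) = fst (\<phi> (0, snd x))"
proof -
  let ?p = "(0, snd x)" and ?q = "(1, snd x)"
  have pq: "?p \<in> grid m n" "?q \<in> grid m n"
    using assms m by auto
  have "\<phi> ?p \<noteq> \<phi> ?q"
    using inj_onD[OF inj _ pq] by auto
  moreover have "same_line (\<phi> ?p) (\<phi> ?q)" "same_line (\<phi> ?p) (\<phi> x)" "same_line (\<phi> ?q) (\<phi> x)"
    using same_line_iff pq assms by (simp_all add: same_line_def)
  ultimately show "col_to_col (snd x) \<Longrightarrow> snd (\<phi> x) = snd (\<phi> (0, snd x))"
    and "\<not> col_to_col (snd x) \<Longrightarrow> fst (\<phi> x) = fst (\<phi> (0, snd x))"
    unfolding col_to_col_def by (auto dest: same_line_third_point)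
qed

lemma row_to_row_iff_col_to_col:
  assumes "i < m" "j < n"
  shows "row_to_row i \<longleftrightarrow> col_to_col j"
proof (rule ccontr)
  (* Otherwise row i and column j are mapped into one common line through \<phi> (i, j), which
    would make the images of the adjacent vertices (i, j') and (i', j) non-adjacent. *)
  assume mixed: "row_to_row i \<noteq> col_to_col j"
  define i' where "i' = (if i = 0 then 1 else 0 :: nat)"
  define j' where "j' = (if j = 0 then 1 else 0 :: nat)"
  have grid: "(i, j') \<in> grid m n" "(i', j) \<in> grid m n" "(i, j) \<in> grid m n"
    using assms m n by (auto simp: i'_def j'_def)
  have "\<not> same_line (i, j') (i', j)"
    by (simp add: same_line_def i'_def j'_def)
  then have "\<not> same_line (\<phi> (i, j')) (\<phi> (i', j))"
    using same_line_iff grid by blast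
  moreover have "same_line (\<phi> (i, j')) (\<phi> (i', j))"
    using mixed row_image[OF grid(1)] row_image[OF grid(3)] col_image[OF grid(2)] col_image[OF grid(3)]
    by (cases "row_to_row i") (auto simp: same_line_def)
  ultimately show False by contradiction
qed

lemma grid_map_cases:
  obtains (product) \<pi> \<rho> where "\<And>x. x \<in> grid m n \<Longrightarrow> \<phi> x = (\<pi> (fst x), \<rho> (snd x))"
  | (swap) \<alpha> \<beta> where "\<And>x. x \<in> grid m n \<Longrightarrow> \<phi> x = (\<alpha> (snd x), \<beta> (fst x))"
proof (cases "col_to_col 0")
  case True
  then have "row_to_row (fst x) \<and> col_to_col (snd x)" if "x \<in> grid m n" for x
    using that m n row_to_row_iff_col_to_col[of "fst x" 0] row_to_row_iff_col_to_col[of 0 "snd x"]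
      row_to_row_iff_col_to_col[of 0 0]
    by auto
  then show ?thesis
    using row_image col_image that(1)[of "\<lambda>i. fst (\<phi> (i, 0))" "\<lambda>j. snd (\<phi> (0, j))"]
    by (simp add: prod_eq_iff)
next
  case False
  then have "\<not> row_to_row (fst x) \<and> \<not> col_to_col (snd x)" if "x \<in> grid m n" for x
    using that m n row_to_row_iff_col_to_col[of "fst x" 0] row_to_row_iff_col_to_col[of 0 "snd x"]
      row_to_row_iff_col_to_col[of 0 0]
    by auto
  then show ?thesis
    using row_image col_image that(2)[of "\<lambda>j. fst (\<phi> (0, j))" "\<lambda>i. snd (\<phi> (i, 0))"]
    by (simp add: prod_eq_iff)
qed

end

lemma product_map_regular_imp_coprime:
  assumes maps: "f ` grid m n \<subseteq> grid m n"
    and product: "\<And>x. x \<in> grid m n \<Longrightarrow> f x = (\<pi> (fst x), \<rho> (snd x))"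
    and regular: "\<And>k x. x \<in> grid m n \<Longrightarrow> (f ^^ k) x = x \<Longrightarrow> m * n dvd k"
    and "0 < m" "0 < n"
  shows "coprime m n"
proof -
  have "\<pi> i < m \<and> \<rho> j < n" if "i < m" "j < n" for i j
  proof -
    have "(i, j) \<in> grid m n"
      using that by simp
    then have "f (i, j) \<in> grid m n"
      by (rule subsetD[OF maps imageI])
    then show ?thesis
      using product[of "(i, j)"] that by simp
  qed
  then have "\<pi> ` {0..<m} \<subseteq> {0..<m}" "\<rho> ` {0..<n} \<subseteq> {0..<n}"
    using \<open>0 < m\<close> \<open>0 < n\<close> by auto
  then obtain i r j s where i: "i < m" "0 < r" "r \<le> m" "(\<pi> ^^ r) i = i"
    and j: "j < n" "0 < s" "s \<le> n" "(\<rho> ^^ s) j = j"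
    using \<open>0 < m\<close> \<open>0 < n\<close>
    by (elim exists_periodic_point[of \<pi> "{0..<m}" 0] exists_periodic_point[of \<rho> "{0..<n}" 0]) auto
  have "(f ^^ lcm r s) (i, j) = ((\<pi> ^^ lcm r s) i, (\<rho> ^^ lcm r s) j)"
    using funpow_product_map[OF maps product] i j by simp
  also have "\<dots> = (i, j)"
    using funpow_fixed_dvd[OF i(4)] funpow_fixed_dvd[OF j(4)] by simp
  finally have "m * n dvd lcm r s"
    using i(1) j(1) by (intro regular) simp_all
  then show ?thesis
    using coprime_if_dvd_lcm i j by simp
qed

lemma swap_map_regular_imp_le_2:
  assumes maps: "f ` grid m n \<subseteq> grid m n"
    and swap: "\<And>x. x \<in> grid m n \<Longrightarrow> f x = (\<alpha> (snd x), \<beta> (fst x))"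
    and regular: "\<And>k x. x \<in> grid m n \<Longrightarrow> (f ^^ k) x = x \<Longrightarrow> m * n dvd k"
    and "0 < m" "0 < n"
  shows "m \<le> 2 \<and> n \<le> 2"
proof -
  have \<alpha>\<beta>: "\<alpha> j < m \<and> \<beta> i < n" if "i < m" "j < n" for i j
  proof -
    have "(i, j) \<in> grid m n"
      using that by simp
    then have "f (i, j) \<in> grid m n"
      by (rule subsetD[OF maps imageI])
    then show ?thesis
      using swap[of "(i, j)"] that by simp
  qed
  have square: "(f ^^ 2) x = ((\<alpha> \<circ> \<beta>) (fst x), (\<beta> \<circ> \<alpha>) (snd x))" if "x \<in> grid m n" for x
  proof -
    have "f x \<in> grid m n"
      using that by (rule subsetD[OF maps imageI])
    then show ?thesis
      using swap that by (simp add: numeral_2_eq_2)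
  qed
  have square_maps: "(f ^^ 2) ` grid m n \<subseteq> grid m n"
    using funpow_in_set[OF maps] by blast
  have even_iter: "(f ^^ (2 * k)) x = (((\<alpha> \<circ> \<beta>) ^^ k) (fst x), ((\<beta> \<circ> \<alpha>) ^^ k) (snd x))"
    if "x \<in> grid m n" for k x
    using funpow_product_map[OF square_maps square that, of k] by (simp only: funpow_mult)
  have "(\<alpha> \<circ> \<beta>) ` {0..<m} \<subseteq> {0..<m}" "(\<beta> \<circ> \<alpha>) ` {0..<n} \<subseteq> {0..<n}"
    using \<alpha>\<beta> \<open>0 < m\<close> \<open>0 < n\<close> by auto
  then obtain i r j s where i: "i < m" "0 < r" "r \<le> m" "((\<alpha> \<circ> \<beta>) ^^ r) i = i"
    and j: "j < n" "0 < s" "s \<le> n" "((\<beta> \<circ> \<alpha>) ^^ s) j = j"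
    using \<open>0 < m\<close> \<open>0 < n\<close>
    by (elim exists_periodic_point[of "\<alpha> \<circ> \<beta>" "{0..<m}" 0]
        exists_periodic_point[of "\<beta> \<circ> \<alpha>" "{0..<n}" 0]) auto
  have "(i, \<beta> i) \<in> grid m n" "(\<alpha> j, j) \<in> grid m n"
    using \<alpha>\<beta> i(1) j(1) \<open>0 < m\<close> \<open>0 < n\<close> by auto
  moreover have "(f ^^ (2 * r)) (i, \<beta> i) = (i, \<beta> i)"
    using even_iter[OF calculation(1)] i(4) by (simp flip: funpow_comp_commute)
  moreover have "(f ^^ (2 * s)) (\<alpha> j, j) = (\<alpha> j, j)"
    using even_iter[OF calculation(2)] j(4) by (simp flip: funpow_comp_commute)
  ultimately have "m * n dvd 2 * r" "m * n dvd 2 * s"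
    using regular by blast+
  then have "m * n \<le> 2 * r" "m * n \<le> 2 * s"
    using i(2) j(2) by (simp_all add: dvd_imp_le)
  then have "m * n \<le> m * 2" "m * n \<le> 2 * n"
    using i(3) j(3) by linarith+
  then show ?thesis
    using \<open>0 < m\<close> \<open>0 < n\<close> by simp
qed

lemma tensor_complete_graph_aut_preserves_lines:
  assumes aut: "graph_aut (tensor_product (complete_graph m) (complete_graph n)) \<phi>"
    and "2 \<le> m" "2 \<le> n"
  shows "line_preserving_grid_map m n \<phi>"
proof
  have bij: "bij_betw \<phi> (grid m n) (grid m n)"
    using aut unfolding graph_aut_def verts_tensor_complete_graph by blast
  then show "inj_on \<phi> (grid m n)"
    by (rule bij_betw_imp_inj_on)
  show "same_line (\<phi> x) (\<phi> y) \<longleftrightarrow> same_line x y" if "x \<in> grid m n" "y \<in> grid m n" for x y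
  proof -
    let ?T = "tensor_product (complete_graph m) (complete_graph n)"
    have "\<phi> x \<in> grid m n" "\<phi> y \<in> grid m n"
      using bij_betwE[OF bij] that by blast+
    then have "same_line (\<phi> x) (\<phi> y) \<longleftrightarrow> \<not> adj ?T (\<phi> x) (\<phi> y)"
      by (simp add: adj_tensor_complete_graph)
    also have "\<dots> \<longleftrightarrow> \<not> adj ?T x y"
      using aut that unfolding graph_aut_def verts_tensor_complete_graph by blast
    also have "\<dots> \<longleftrightarrow> same_line x y"
      using that by (simp add: adj_tensor_complete_graph)
    finally show ?thesis .
  qed
qed (use assms in simp_all)

theorem theorem2:
  fixes m n :: nat
  assumes "m \<ge> 1" and "n \<ge> 1" and "gcd m n > 1" and "\<not> (m = 2 \<and> n = 2)"
  shows "\<not> is_circulant (tensor_product (complete_graph m) (complete_graph n))"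
proof
  let ?T = "tensor_product (complete_graph m) (complete_graph n)"
  assume "is_circulant ?T"
  then obtain \<phi> where aut: "graph_aut ?T \<phi>"
    and "\<And>k x. x \<in> verts ?T \<Longrightarrow> (\<phi> ^^ k) x = x \<Longrightarrow> card (verts ?T) dvd k"
    by (erule is_circulant_regular_aut)
  then have regular: "\<And>k x. x \<in> grid m n \<Longrightarrow> (\<phi> ^^ k) x = x \<Longrightarrow> m * n dvd k"
    by (simp add: verts_tensor_complete_graph card_cartesian_product)
  have maps: "\<phi> ` grid m n \<subseteq> grid m n"
    using aut unfolding graph_aut_def verts_tensor_complete_graph by (simp add: bij_betw_def)
  have "m \<noteq> 1" "n \<noteq> 1"
    using assms(3) by auto
  then have m: "2 \<le> m" and n: "2 \<le> n"
    using assms(1,2) by linarith+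
  interpret line_preserving_grid_map m n \<phi>
    using tensor_complete_graph_aut_preserves_lines[OF aut m n] .
  show False
  proof (cases rule: grid_map_cases)
    case product
    have "coprime m n"
      using m n by (intro product_map_regular_imp_coprime[OF maps product regular]) simp_all
    then show False
      using assms(3) by (simp add: coprime_iff_gcd_eq_1)
  next
    case swap
    have "m \<le> 2 \<and> n \<le> 2"
      using m n by (intro swap_map_regular_imp_le_2[OF maps swap regular]) simp_all
    then show False
      using assms(4) m n by simp
  qed
qed

end
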